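(* Let $G$ be a graph, $X_C \subseteq V(G)$, $z \geq 0$, and let $H$ be an $X_C$-certificate of order $z$ in $G$. Let $D$ be a connected component of $H - X_C$, let $H'$ be the connected component of $H$ containing $D$, and let $X_C' := X_C \cap V(H')$. Suppose that: (1) for each $x \in X_C'$ such that $H[\{x\} \cup V(D)]$ contains an odd cycle, there are at least $z$ connected components $D' \neq D$ of $H - X_C$ such that $H[\{x\} \cup V(D')]$ contains an odd cycle; and (2) for each pair of distinct $x, y \in X_C'$ and each parity $p \in \{0,1\}$, if $H[\{x,y\} \cup V(D)]$ contains an $(x,y)$-path of length congruent to $p$ modulo $2$, then there are at least $z$ connected components $D' \neq D$ of $H - X_C$ such that $H[\{x,y\} \cup V(D')]$ contains an $(x,y)$-path of length congruent to $p$ modulo $2$. Then $\mathrm{oct}(H) = \mathrm{oct}(H - V(D))$.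
   Context: $\mathrm{oct}(H)$ denotes the minimum size of a set $S\subseteq V(H)$ with $H - S$ bipartite. For $X_C \subseteq V(G)$, an $X_C$-certificate of order $z$ is a subgraph $H$ of $G$ such that $H - X_C$ is bipartite, $\mathrm{oct}(H)=|X_C|$, and each connected component $H'$ of $H$ has $|X_C\cap V(H')|\le z$. *)

theory Defs
  imports Main
begin

type_synonym 'a graph = "'a set \<times> 'a set set"

definition verts :: "'a graph \<Rightarrow> 'a set" where "verts G = fst G"
definition edges :: "'a graph \<Rightarrow> 'a set set" where "edges G = snd G"

definition wf_graph :: "'a graph \<Rightarrow> bool" where
  "wf_graph G \<longleftrightarrow> finite (verts G) \<and> (\<forall>e\<in>edges G. e \<subseteq> verts G \<and> card e = 2)"

definition adj :: "'a graph \<Rightarrow> 'a \<Rightarrow> 'a \<Rightarrow> bool" where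
  "adj G u v \<longleftrightarrow> {u, v} \<in> edges G"

definition subgraph :: "'a graph \<Rightarrow> 'a graph \<Rightarrow> bool" where
  "subgraph H G \<longleftrightarrow> wf_graph H \<and> verts H \<subseteq> verts G \<and> edges H \<subseteq> edges G"

definition induced :: "'a graph \<Rightarrow> 'a set \<Rightarrow> 'a graph" where
  "induced G S = (verts G \<inter> S, {e \<in> edges G. e \<subseteq> S})"

definition delete :: "'a graph \<Rightarrow> 'a set \<Rightarrow> 'a graph" where
  "delete G S = induced G (verts G - S)"

definition bipartite :: "'a graph \<Rightarrow> bool" where
  "bipartite G \<longleftrightarrow> (\<exists>A. \<forall>e\<in>edges G. card (e \<inter> A) = 1)"

definition oct :: "'a graph \<Rightarrow> nat" where
  "oct G = (LEAST k. \<exists>S. S \<subseteq> verts G \<and> card S = k \<and> bipartite (delete G S))"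

definition is_path :: "'a graph \<Rightarrow> 'a list \<Rightarrow> bool" where
  "is_path G xs \<longleftrightarrow> xs \<noteq> [] \<and> distinct xs \<and> set xs \<subseteq> verts G \<and>
     (\<forall>i. Suc i < length xs \<longrightarrow> adj G (xs ! i) (xs ! Suc i))"

definition has_path_parity :: "'a graph \<Rightarrow> 'a \<Rightarrow> 'a \<Rightarrow> nat \<Rightarrow> bool" where
  "has_path_parity G x y p \<longleftrightarrow>
     (\<exists>xs. is_path G xs \<and> hd xs = x \<and> last xs = y \<and> (length xs - 1) mod 2 = p)"

definition is_cycle :: "'a graph \<Rightarrow> 'a list \<Rightarrow> bool" where
  "is_cycle G xs \<longleftrightarrow> length xs \<ge> 3 \<and> is_path G xs \<and> adj G (last xs) (hd xs)"

definition has_odd_cycle :: "'a graph \<Rightarrow> bool" where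
  "has_odd_cycle G \<longleftrightarrow> (\<exists>xs. is_cycle G xs \<and> odd (length xs))"

definition reach :: "'a graph \<Rightarrow> 'a \<Rightarrow> 'a \<Rightarrow> bool" where
  "reach G = (\<lambda>u v. u \<in> verts G \<and> v \<in> verts G \<and> adj G u v)\<^sup>*\<^sup>*"

definition component :: "'a graph \<Rightarrow> 'a set \<Rightarrow> bool" where
  "component G C \<longleftrightarrow> (\<exists>u\<in>verts G. C = {v. reach G u v})"

definition certificate :: "'a graph \<Rightarrow> 'a set \<Rightarrow> nat \<Rightarrow> 'a graph \<Rightarrow> bool" where
  "certificate G XC z H \<longleftrightarrow> subgraph H G \<and> bipartite (delete H XC) \<and> oct H = card XC \<and>
     (\<forall>C. component H C \<longrightarrow> card (XC \<inter> C) \<le> z)"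

end

theory Submission
  imports Defs "HOL-Library.Transitive_Closure_Table"
begin

text \<open>
  Deleting vertices never increases \<open>oct\<close>. Conversely, let \<open>S\<close> be a minimum odd cycle
  transversal of \<open>H - D\<close> and suppose \<open>|S| < oct H = |X\<^sub>C|\<close>. Replacing \<open>S \<inter> H'\<close> by
  \<open>X\<^sub>C \<inter> H'\<close> would give a transversal of \<open>H\<close>, so \<open>S\<close> meets \<open>H'\<close> in fewer than
  \<open>|X\<^sub>C \<inter> H'| \<le> z\<close> vertices. Hence among the \<open>z\<close> components \<open>D' \<noteq> D\<close> that repeat a
  pattern of \<open>D\<close> (an odd cycle through \<open>x\<close>, or an \<open>(x,y)\<close>-path of given parity) one avoids
  \<open>S\<close> inside \<open>H'\<close>, and it realises the pattern in \<open>H - D - S\<close>. Therefore no odd cycle of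
  \<open>H[{x} \<union> D]\<close> survives, and any 2-colouring of \<open>H - D - S\<close> colours \<open>x, y\<close> as the
  parities of their paths through \<open>D\<close> dictate. A 2-colouring of the bipartite component \<open>D\<close>,
  flipped if necessary, then extends it, so \<open>S\<close> is a transversal of \<open>H\<close> itself.
\<close>

lemma adj_commute: "adj G u v \<longleftrightarrow> adj G v u"
  unfolding adj_def by (simp add: insert_commute)

lemma adj_imp_verts:
  assumes "wf_graph G" "adj G u v"
  shows "u \<in> verts G" "v \<in> verts G" "u \<noteq> v"
proof -
  have "{u, v} \<subseteq> verts G" "card {u, v} = 2"
    using assms unfolding wf_graph_def adj_def by auto
  then show "u \<in> verts G" "v \<in> verts G" "u \<noteq> v"
    by (auto simp: card_insert_if split: if_splits)
qed

lemma verts_induced [simp]: "verts (induced G W) = verts G \<inter> W"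
  by (simp add: induced_def verts_def)

lemma edges_induced [simp]: "edges (induced G W) = {e \<in> edges G. e \<subseteq> W}"
  by (simp add: induced_def edges_def)

lemma adj_induced [simp]: "adj (induced G W) u v \<longleftrightarrow> adj G u v \<and> u \<in> W \<and> v \<in> W"
  by (auto simp: adj_def)

lemma wf_graph_induced: "wf_graph G \<Longrightarrow> wf_graph (induced G W)"
  unfolding wf_graph_def by auto

lemma verts_delete [simp]: "verts (delete G X) = verts G - X"
  by (auto simp: delete_def)

lemma adj_delete [simp]:
  "adj (delete G X) u v \<longleftrightarrow> adj G u v \<and> u \<in> verts G - X \<and> v \<in> verts G - X"
  by (auto simp: delete_def)

lemma wf_graph_delete: "wf_graph G \<Longrightarrow> wf_graph (delete G X)"
  unfolding delete_def by (rule wf_graph_induced)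

lemma delete_delete: "delete (delete G X) Y = delete G (X \<union> Y)"
  unfolding delete_def induced_def verts_def edges_def by auto

lemma is_path_iff_successively:
  "is_path G xs \<longleftrightarrow> xs \<noteq> [] \<and> distinct xs \<and> set xs \<subseteq> verts G \<and> successively (adj G) xs"
  unfolding is_path_def successively_conv_nth by simp

lemma is_path_induced_iff: "is_path (induced G W) xs \<longleftrightarrow> is_path G xs \<and> set xs \<subseteq> W"
  unfolding is_path_iff_successively
  by (auto simp: successively_conv_nth dest: nth_mem)

lemma is_cycle_induced_iff: "is_cycle (induced G W) xs \<longleftrightarrow> is_cycle G xs \<and> set xs \<subseteq> W"
  unfolding is_cycle_def is_path_induced_iff
  by (auto simp: is_path_def)

lemma has_odd_cycle_induced_mono:
  "has_odd_cycle (induced G W) \<Longrightarrow> W \<subseteq> W' \<Longrightarrow> has_odd_cycle (induced G W')"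
  unfolding has_odd_cycle_def is_cycle_induced_iff by blast

lemma has_path_parity_induced_mono:
  "has_path_parity (induced G W) x y p \<Longrightarrow> W \<subseteq> W' \<Longrightarrow> has_path_parity (induced G W') x y p"
  unfolding has_path_parity_def is_path_induced_iff by blast

definition two_colouring :: "'a graph \<Rightarrow> 'a set \<Rightarrow> bool" where
  "two_colouring G A \<longleftrightarrow> (\<forall>u v. adj G u v \<longrightarrow> (u \<in> A \<longleftrightarrow> v \<notin> A))"

lemma bipartite_iff_two_colouring:
  assumes "wf_graph G"
  shows "bipartite G \<longleftrightarrow> (\<exists>A. two_colouring G A)"
proof -
  have "card (e \<inter> A) = 1 \<longleftrightarrow> (u \<in> A \<longleftrightarrow> v \<notin> A)" if "e = {u, v}" "u \<noteq> v" for e u v A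
    using that by (cases "u \<in> A"; cases "v \<in> A") auto
  moreover have "\<exists>u v. e = {u, v} \<and> u \<noteq> v \<and> adj G u v" if "e \<in> edges G" for e
    using that assms unfolding wf_graph_def adj_def by (metis card_2_iff)
  ultimately show ?thesis
    unfolding bipartite_def two_colouring_def
    by (metis adj_def adj_imp_verts(3)[OF assms])
qed

lemma two_colouring_parity:
  assumes "two_colouring G A" "successively (adj G) xs" "xs \<noteq> []"
  shows "(hd xs \<in> A \<longleftrightarrow> last xs \<in> A) \<longleftrightarrow> odd (length xs)"
  using assms(2,3)
proof (induction xs rule: induct_list012)
  case (3 x y zs)
  then have "x \<in> A \<longleftrightarrow> y \<notin> A" and "(y \<in> A \<longleftrightarrow> last (y # zs) \<in> A) \<longleftrightarrow> odd (length (y # zs))"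
    using assms(1) unfolding two_colouring_def by auto
  then show ?case by auto
qed simp_all

lemma two_colouring_has_path_parity:
  assumes "two_colouring G A" "has_path_parity G x y p" "p \<in> {0, 1}"
  shows "(x \<in> A \<longleftrightarrow> y \<in> A) \<longleftrightarrow> p = 0"
proof -
  obtain xs where xs: "is_path G xs" "hd xs = x" "last xs = y" "(length xs - 1) mod 2 = p"
    using assms(2) unfolding has_path_parity_def by blast
  then have "p = 0 \<longleftrightarrow> odd (length xs)"
    using assms(3) unfolding is_path_def by (cases xs) auto
  with xs two_colouring_parity[OF assms(1)] show ?thesis
    unfolding is_path_iff_successively by auto
qed

lemma two_colouring_no_odd_cycle:
  assumes "two_colouring G A"
  shows "\<not> has_odd_cycle G"
proof
  assume "has_odd_cycle G"
  then obtain xs where xs: "is_cycle G xs" "odd (length xs)"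
    unfolding has_odd_cycle_def by blast
  then have "hd xs \<in> A \<longleftrightarrow> last xs \<in> A"
    using two_colouring_parity[OF assms] unfolding is_cycle_def is_path_iff_successively
    by blast
  moreover have "adj G (last xs) (hd xs)"
    using xs(1) unfolding is_cycle_def by blast
  ultimately show False
    using assms unfolding two_colouring_def by blast
qed

lemma bipartite_no_odd_cycle: "wf_graph G \<Longrightarrow> bipartite G \<Longrightarrow> \<not> has_odd_cycle G"
  using bipartite_iff_two_colouring two_colouring_no_odd_cycle by blast

lemma reach_sym: "reach G u v \<Longrightarrow> reach G v u"
  unfolding reach_def
  by (rule symp_rtranclp[THEN sympD]) (auto simp: symp_def adj_commute)

lemma reach_trans: "reach G u v \<Longrightarrow> reach G v w \<Longrightarrow> reach G u w"
  unfolding reach_def by (rule rtranclp_trans)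

lemma component_eq: "component G C \<Longrightarrow> v \<in> C \<Longrightarrow> C = {w. reach G v w}"
  unfolding component_def by (auto intro: reach_trans reach_sym)

lemma components_disjoint: "pairwise disjnt {C. component G C}"
  unfolding pairwise_def disjnt_def by (metis component_eq disjoint_iff mem_Collect_eq)

lemma component_subset_verts: "component G C \<Longrightarrow> C \<subseteq> verts G"
  unfolding component_def reach_def
  by (auto elim: rtranclp_induct)

lemma component_adj_closed:
  assumes "wf_graph G" "component G C" "adj G u v"
  shows "u \<in> C \<longleftrightarrow> v \<in> C"
proof -
  have "reach G u v"
    using assms adj_imp_verts[OF assms(1,3)] unfolding reach_def by blast
  then show ?thesis
    using component_eq[OF assms(2)] reach_sym by (metis mem_Collect_eq)
qed

lemma walk_subset_component:
  assumes "wf_graph G" "component G C" "successively (adj G) xs" "v \<in> set xs" "v \<in> C"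
  shows "set xs \<subseteq> C"
  using assms(3-5)
proof (induction xs arbitrary: v rule: induct_list012)
  case (3 x y zs)
  then have "x \<in> C \<longleftrightarrow> y \<in> C"
    using component_adj_closed[OF assms(1,2)] by simp
  with 3 show ?case by auto
qed auto

lemma rtrancl_path_successively:
  "rtrancl_path r x xs y \<Longrightarrow> successively r (x # xs) \<and> last (x # xs) = y"
  by (induction rule: rtrancl_path.induct) (auto simp: successively_Cons)

lemma component_path:
  assumes "wf_graph G" "component G C" "u \<in> C" "v \<in> C"
  obtains xs where "is_path G xs" "hd xs = u" "last xs = v" "set xs \<subseteq> C"
proof -
  let ?R = "\<lambda>u v. u \<in> verts G \<and> v \<in> verts G \<and> adj G u v"
  have "?R\<^sup>*\<^sup>* u v"
    using component_eq[OF assms(2,3)] assms(4) unfolding reach_def by blast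
  then obtain ys where ys: "rtrancl_path ?R u ys v" "distinct (u # ys)"
    by (meson rtranclp_eq_rtrancl_path rtrancl_path_distinct)
  have walk: "successively (adj G) (u # ys)" "last (u # ys) = v"
    using rtrancl_path_successively[OF ys(1)] by (auto elim: successively_mono)
  then have "set (u # ys) \<subseteq> C"
    using walk_subset_component[OF assms(1,2) walk(1), of u] assms(3) by simp
  moreover have "set (u # ys) \<subseteq> verts G"
    using calculation component_subset_verts[OF assms(2)] by blast
  ultimately show ?thesis
    using that[of "u # ys"] walk ys(2) unfolding is_path_iff_successively by simp
qed

lemma bipartite_delete_mono:
  assumes "bipartite (delete G X)" "X \<inter> verts G \<subseteq> Y"
  shows "bipartite (delete G Y)"
proof -
  have "edges (delete G Y) \<subseteq> edges (delete G X)"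
    using assms(2) by (auto simp: delete_def)
  with assms(1) show ?thesis
    unfolding bipartite_def by blast
qed

lemma oct_le: "S \<subseteq> verts G \<Longrightarrow> bipartite (delete G S) \<Longrightarrow> oct G \<le> card S"
  unfolding oct_def by (rule Least_le) blast

lemma oct_attained:
  assumes "wf_graph G"
  obtains S where "S \<subseteq> verts G" "card S = oct G" "bipartite (delete G S)"
proof -
  have "bipartite (delete G (verts G))"
    using assms unfolding bipartite_def wf_graph_def by (auto simp: delete_def)
  then have "\<exists>k S. S \<subseteq> verts G \<and> card S = k \<and> bipartite (delete G S)"
    by blast
  from LeastI_ex[OF this] show ?thesis
    using that unfolding oct_def by blast
qed

lemma oct_delete_le:
  assumes "wf_graph G"
  shows "oct (delete G D) \<le> oct G"
proof -
  obtain T where T: "T \<subseteq> verts G" "card T = oct G" "bipartite (delete G T)"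
    using oct_attained[OF assms] .
  have "bipartite (delete (delete G D) (T - D))"
    unfolding delete_delete by (rule bipartite_delete_mono[OF T(3)]) blast
  then have "oct (delete G D) \<le> card (T - D)"
    using T(1) by (intro oct_le) auto
  also have "\<dots> \<le> card T"
    using T(1) assms finite_subset unfolding wf_graph_def by (intro card_mono) auto
  finally show ?thesis
    using T(2) by simp
qed

lemma oct_le_patch:
  assumes "wf_graph H" "component H C" "Y \<subseteq> verts H"
    and "bipartite (delete H X)" "bipartite (delete H Y)"
  shows "oct H \<le> card (Y - C) + card (X \<inter> C)"
proof -
  obtain AX where AX: "two_colouring (delete H X) AX"
    using assms(4) bipartite_iff_two_colouring[OF wf_graph_delete[OF assms(1)]] by blast
  obtain AY where AY: "two_colouring (delete H Y) AY"
    using assms(5) bipartite_iff_two_colouring[OF wf_graph_delete[OF assms(1)]] by blast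
  define Z where "Z = (Y - C) \<union> (X \<inter> C)"
  \<comment> \<open>No edge leaves \<open>C\<close>, so \<open>C\<close> may be coloured as in \<open>H - X\<close> and the rest as in \<open>H - Y\<close>.\<close>
  have "two_colouring (delete H Z) ((AY - C) \<union> (AX \<inter> C))"
    unfolding two_colouring_def
  proof (intro allI impI)
    fix u v assume uv: "adj (delete H Z) u v"
    have C: "u \<in> C \<longleftrightarrow> v \<in> C"
      using uv component_adj_closed[OF assms(1,2)] by simp
    show "u \<in> (AY - C) \<union> (AX \<inter> C) \<longleftrightarrow> v \<notin> (AY - C) \<union> (AX \<inter> C)"
    proof (cases "u \<in> C")
      case True
      then have "adj (delete H X) u v"
        using uv C by (auto simp: Z_def)
      then show ?thesis
        using AX True C unfolding two_colouring_def by blast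
    next
      case False
      then have "adj (delete H Y) u v"
        using uv C by (auto simp: Z_def)
      then show ?thesis
        using AY False C unfolding two_colouring_def by blast
    qed
  qed
  then have "bipartite (delete H Z)"
    using bipartite_iff_two_colouring[OF wf_graph_delete[OF assms(1)]] by blast
  then have "oct H \<le> card Z"
    using assms(3) component_subset_verts[OF assms(2)] by (intro oct_le) (auto simp: Z_def)
  also have "\<dots> \<le> card (Y - C) + card (X \<inter> C)"
    unfolding Z_def by (rule card_Un_le)
  finally show ?thesis .
qed

lemma card_Int_component_less_if_card_less_oct:
  assumes "wf_graph H" "component H C" "D \<subseteq> C" "S \<subseteq> verts H"
    and "bipartite (delete H X)" "bipartite (delete H (D \<union> S))" "card S < oct H"
  shows "card (S \<inter> C) < card (X \<inter> C)"
proof -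
  have "D \<union> S \<subseteq> verts H"
    using assms(3,4) component_subset_verts[OF assms(2)] by blast
  then have "oct H \<le> card ((D \<union> S) - C) + card (X \<inter> C)"
    using oct_le_patch[OF assms(1,2) _ assms(5,6)] by blast
  moreover have "card ((D \<union> S) - C) = card (S - C)"
    using assms(3) by (auto intro!: arg_cong[where f = card])
  moreover have "card S = card (S \<inter> C) + card (S - C)"
    using assms(1,4) finite_subset unfolding wf_graph_def by (intro card_Int_Diff) auto
  ultimately show ?thesis
    using assms(7) by linarith
qed

lemma exists_disjnt_member:
  assumes "pairwise disjnt K" "finite T" "card T < card K"
  shows "\<exists>A\<in>K. disjnt A T"
proof (rule ccontr)
  assume "\<not> (\<exists>A\<in>K. disjnt A T)"
  then have meets: "\<exists>v. v \<in> A \<inter> T" if "A \<in> K" for A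
    using that unfolding disjnt_def by blast
  define f where "f A = (SOME v. v \<in> A \<inter> T)" for A
  have f: "f A \<in> A \<inter> T" if "A \<in> K" for A
    unfolding f_def using someI_ex[OF meets[OF that]] .
  have "inj_on f K"
  proof (rule inj_onI)
    fix A B assume "A \<in> K" "B \<in> K" "f A = f B"
    then have "f A \<in> A \<inter> B"
      using f by (metis IntD1 IntI)
    then have "\<not> disjnt A B"
      unfolding disjnt_def by blast
    with \<open>A \<in> K\<close> \<open>B \<in> K\<close> show "A = B"
      using assms(1) unfolding pairwise_def by blast
  qed
  moreover have "f ` K \<subseteq> T"
    using f by blast
  ultimately have "card K \<le> card T"
    using assms(2) by (rule card_inj_on_le)
  with assms(3) show False
    by simp
qed

lemma has_odd_cycle_induced_Int_component:
  assumes "wf_graph H" "component H C" "bipartite (delete H X)"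
    and "x \<in> C" "x \<in> X" "W \<inter> X = {}"
    and "has_odd_cycle (induced H ({x} \<union> W))"
  shows "has_odd_cycle (induced H (({x} \<union> W) \<inter> C))"
proof -
  obtain zs where zs: "is_cycle H zs" "set zs \<subseteq> {x} \<union> W" "odd (length zs)"
    using assms(7) unfolding has_odd_cycle_def is_cycle_induced_iff by blast
  have "x \<in> set zs"
  proof (rule ccontr)
    assume "x \<notin> set zs"
    then have "set zs \<subseteq> verts H - X"
      using zs(1,2) assms(6) unfolding is_cycle_def is_path_def by blast
    then have "has_odd_cycle (delete H X)"
      using zs unfolding has_odd_cycle_def delete_def is_cycle_induced_iff by blast
    with assms(1,3) show False
      using bipartite_no_odd_cycle wf_graph_delete by blast
  qed
  then have "set zs \<subseteq> C"
    using zs(1) assms(4) walk_subset_component[OF assms(1,2)]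
    unfolding is_cycle_def is_path_iff_successively by blast
  with zs show ?thesis
    unfolding has_odd_cycle_def is_cycle_induced_iff by blast
qed

lemma has_path_parity_induced_Int_component:
  assumes "wf_graph H" "component H C" "x \<in> C"
    and "has_path_parity (induced H W) x y p"
  shows "has_path_parity (induced H (W \<inter> C)) x y p"
proof -
  obtain xs where xs: "is_path H xs" "set xs \<subseteq> W" "hd xs = x" "last xs = y"
      "(length xs - 1) mod 2 = p"
    using assms(4) unfolding has_path_parity_def is_path_induced_iff by blast
  then have "set xs \<subseteq> C"
    using assms(3) walk_subset_component[OF assms(1,2)] unfolding is_path_iff_successively
    by (metis hd_in_set)
  with xs show ?thesis
    unfolding has_path_parity_def is_path_induced_iff by blast
qed

lemma odd_cycle_of_path:
  assumes "wf_graph H" "is_path (induced H D) ys" "x \<notin> D"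
    and "adj H x (hd ys)" "adj H x (last ys)" "even (length ys)"
  shows "has_odd_cycle (induced H ({x} \<union> D))"
proof -
  have ys: "is_path H ys" "set ys \<subseteq> D"
    using assms(2) unfolding is_path_induced_iff by auto
  then have "ys \<noteq> []"
    unfolding is_path_def by blast
  with assms(6) have "length ys \<ge> 2"
    by (cases ys) (auto simp: Suc_le_eq intro: odd_pos)
  with ys have "is_cycle H (x # ys)"
    using assms adj_imp_verts[OF assms(1,4)]
    unfolding is_cycle_def is_path_iff_successively
    by (auto simp: successively_Cons adj_commute)
  with ys assms(6) show ?thesis
    unfolding has_odd_cycle_def is_cycle_induced_iff by (intro exI[of _ "x # ys"]) auto
qed

lemma path_parity_of_path:
  assumes "wf_graph H" "is_path (induced H D) ys" "x \<noteq> y" "x \<notin> D" "y \<notin> D"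
    and "adj H x (hd ys)" "adj H y (last ys)"
  shows "has_path_parity (induced H ({x, y} \<union> D)) x y ((length ys + 1) mod 2)"
proof -
  have ys: "is_path H ys" "set ys \<subseteq> D"
    using assms(2) unfolding is_path_induced_iff by auto
  then have "is_path H (x # ys @ [y])"
    using assms adj_imp_verts[OF assms(1,6)] adj_imp_verts[OF assms(1,7)]
    unfolding is_path_iff_successively
    by (auto simp: successively_Cons successively_append_iff adj_commute)
  with ys show ?thesis
    unfolding has_path_parity_def is_path_induced_iff by (intro exI[of _ "x # ys @ [y]"]) auto
qed

lemma bipartite_glue:
  assumes "wf_graph G" "two_colouring (delete G D) A" "two_colouring (induced G D) B"
    and consistent: "\<And>x d x' d'. adj G x d \<Longrightarrow> adj G x' d' \<Longrightarrow> x \<notin> D \<Longrightarrow> x' \<notin> D \<Longrightarrow>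
      d \<in> D \<Longrightarrow> d' \<in> D \<Longrightarrow> (x \<in> A \<longleftrightarrow> x' \<in> A) \<longleftrightarrow> (d \<in> B \<longleftrightarrow> d' \<in> B)"
  shows "bipartite G"
proof -
  obtain f where f: "\<And>x d. adj G x d \<Longrightarrow> x \<notin> D \<Longrightarrow> d \<in> D \<Longrightarrow> x \<in> A \<longleftrightarrow> (d \<in> B \<longleftrightarrow> \<not> f)"
  proof (cases "\<exists>x d. adj G x d \<and> x \<notin> D \<and> d \<in> D")
    case True
    then obtain x0 d0 where "adj G x0 d0" "x0 \<notin> D" "d0 \<in> D"
      by blast
    then show ?thesis
      using that[of "d0 \<in> B \<longleftrightarrow> x0 \<notin> A"] consistent by blast
  qed blast
  \<comment> \<open>\<open>f\<close> tells whether \<open>B\<close> must be flipped on \<open>D\<close> to match \<open>A\<close> along the edges leaving \<open>D\<close>.\<close>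
  define A' where "A' = (A - D) \<union> {d \<in> D. d \<in> B \<longleftrightarrow> f}"
  have cross: "u \<in> A' \<longleftrightarrow> v \<notin> A'" if "adj G u v" "u \<notin> D" "v \<in> D" for u v
    using f[OF that] that(2,3) unfolding A'_def by auto
  have "two_colouring G A'"
    unfolding two_colouring_def
  proof (intro allI impI)
    fix u v assume uv: "adj G u v"
    note uv_verts = adj_imp_verts[OF assms(1) uv]
    consider "u \<in> D" "v \<in> D" | "u \<notin> D" "v \<notin> D" | "u \<notin> D" "v \<in> D" | "u \<in> D" "v \<notin> D"
      by blast
    then show "u \<in> A' \<longleftrightarrow> v \<notin> A'"
    proof cases
      case 1
      then show ?thesis
        using assms(3) uv unfolding two_colouring_def A'_def by auto
    next
      case 2
      then show ?thesis
        using assms(2) uv uv_verts unfolding two_colouring_def A'_def by auto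
    next
      case 3
      then show ?thesis
        using cross uv by blast
    next
      case 4
      then show ?thesis
        using cross uv adj_commute by metis
    qed
  qed
  then show ?thesis
    using bipartite_iff_two_colouring[OF assms(1)] by blast
qed

locale sparse_transversal =
  fixes H :: "'a graph" and XC D C S A B :: "'a set" and z :: nat
  assumes wf: "wf_graph H"
    and B_colouring: "two_colouring (delete H XC) B"
    and D_component: "component (delete H XC) D"
    and C_component: "component H C" and D_subset_C: "D \<subseteq> C"
    and S_subset: "S \<subseteq> verts H - D"
    and A_colouring: "two_colouring (delete H (D \<union> S)) A"
    and sparse: "card (S \<inter> C) < z"
    and odd_cycles_repeat: "\<forall>x\<in>XC \<inter> C. has_odd_cycle (induced H ({x} \<union> D)) \<longrightarrow>
      card {D'. component (delete H XC) D' \<and> D' \<noteq> D \<and>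
                has_odd_cycle (induced H ({x} \<union> D'))} \<ge> z"
    and path_parities_repeat: "\<forall>x\<in>XC \<inter> C. \<forall>y\<in>XC \<inter> C. \<forall>p\<in>{0, 1::nat}. x \<noteq> y \<longrightarrow>
      has_path_parity (induced H ({x, y} \<union> D)) x y p \<longrightarrow>
      card {D'. component (delete H XC) D' \<and> D' \<noteq> D \<and>
                has_path_parity (induced H ({x, y} \<union> D')) x y p} \<ge> z"
begin

lemma D_subset_verts: "D \<subseteq> verts H - XC"
  using component_subset_verts[OF D_component] by simp

lemma component_avoiding_S:
  assumes "K \<subseteq> {D'. component (delete H XC) D'}" "z \<le> card K"
  shows "\<exists>D'\<in>K. D' \<inter> S \<inter> C = {}"
proof -
  have "finite (S \<inter> C)"
    using S_subset wf finite_subset unfolding wf_graph_def by blast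
  moreover have "pairwise disjnt K"
    using pairwise_subset[OF components_disjoint assms(1)] .
  moreover have "card (S \<inter> C) < card K"
    using sparse assms(2) by linarith
  ultimately obtain D' where "D' \<in> K" "disjnt D' (S \<inter> C)"
    using exists_disjnt_member by blast
  then show ?thesis
    unfolding disjnt_def by (auto simp: Int_assoc)
qed

lemma outside_D_and_S:
  assumes "x \<in> XC \<inter> C - S" "y \<in> XC \<inter> C - S"
    and "component (delete H XC) D'" "D' \<noteq> D" "D' \<inter> S \<inter> C = {}"
  shows "({x, y} \<union> D') \<inter> C \<subseteq> verts H - (D \<union> S)"
proof -
  have "D' \<inter> D = {}"
    using pairwiseD[OF components_disjoint[of "delete H XC"]] assms(3,4) D_component
    unfolding disjnt_def by blast
  moreover have "C \<subseteq> verts H"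
    using C_component by (rule component_subset_verts)
  moreover have "x \<notin> D" "y \<notin> D"
    using assms(1,2) D_subset_verts by auto
  ultimately show ?thesis
    using assms(1,2,5) by auto
qed

lemma no_odd_cycle_at_D:
  assumes x: "x \<in> XC \<inter> C - S"
  shows "\<not> has_odd_cycle (induced H ({x} \<union> D))"
proof
  let ?K = "{D'. component (delete H XC) D' \<and> D' \<noteq> D \<and> has_odd_cycle (induced H ({x} \<union> D'))}"
  assume "has_odd_cycle (induced H ({x} \<union> D))"
  then have "z \<le> card ?K"
    using odd_cycles_repeat x by blast
  then obtain D' where D': "component (delete H XC) D'" "D' \<noteq> D"
      "has_odd_cycle (induced H ({x} \<union> D'))" "D' \<inter> S \<inter> C = {}"
    using component_avoiding_S[of ?K] by blast
  have "bipartite (delete H XC)"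
    using B_colouring bipartite_iff_two_colouring wf_graph_delete[OF wf] by blast
  moreover have "D' \<inter> XC = {}"
    using component_subset_verts[OF D'(1)] by auto
  ultimately have "has_odd_cycle (induced H (({x} \<union> D') \<inter> C))"
    using has_odd_cycle_induced_Int_component[OF wf C_component _ _ _ _ D'(3)] x by blast
  moreover have "({x} \<union> D') \<inter> C \<subseteq> verts H - (D \<union> S)"
    using outside_D_and_S[OF x x D'(1,2,4)] by simp
  ultimately have "has_odd_cycle (delete H (D \<union> S))"
    unfolding delete_def by (rule has_odd_cycle_induced_mono)
  with A_colouring show False
    using two_colouring_no_odd_cycle by blast
qed

lemma path_parity_at_D:
  assumes x: "x \<in> XC \<inter> C - S" and y: "y \<in> XC \<inter> C - S" and "x \<noteq> y" "p \<in> {0, 1}"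
    and "has_path_parity (induced H ({x, y} \<union> D)) x y p"
  shows "(x \<in> A \<longleftrightarrow> y \<in> A) \<longleftrightarrow> p = 0"
proof -
  let ?K = "{D'. component (delete H XC) D' \<and> D' \<noteq> D \<and>
    has_path_parity (induced H ({x, y} \<union> D')) x y p}"
  have "z \<le> card ?K"
    using path_parities_repeat assms by blast
  then obtain D' where D': "component (delete H XC) D'" "D' \<noteq> D"
      "has_path_parity (induced H ({x, y} \<union> D')) x y p" "D' \<inter> S \<inter> C = {}"
    using component_avoiding_S[of ?K] by blast
  have "has_path_parity (induced H (({x, y} \<union> D') \<inter> C)) x y p"
    using has_path_parity_induced_Int_component[OF wf C_component _ D'(3)] x by blast
  then have "has_path_parity (delete H (D \<union> S)) x y p"
    unfolding delete_def by (rule has_path_parity_induced_mono[OF _ outside_D_and_S[OF x y D'(1,2,4)]])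
  from two_colouring_has_path_parity[OF A_colouring this assms(4)] show ?thesis .
qed

lemma neighbour_of_D:
  assumes "adj H x d" "d \<in> D" "x \<notin> D"
  shows "x \<in> XC \<inter> C"
proof -
  have "x \<in> C"
    using assms D_subset_C component_adj_closed[OF wf C_component] by blast
  moreover have "x \<in> XC"
  proof (rule ccontr)
    assume "x \<notin> XC"
    then have "adj (delete H XC) x d"
      using assms D_subset_verts adj_imp_verts[OF wf assms(1)] by auto
    with assms(2,3) show False
      using component_adj_closed[OF wf_graph_delete[OF wf] D_component] by blast
  qed
  ultimately show ?thesis
    by blast
qed

lemma cross_edges_consistent:
  assumes "adj H x d" "adj H x' d'" "x \<notin> S" "x' \<notin> S" "x \<notin> D" "x' \<notin> D" "d \<in> D" "d' \<in> D"
  shows "(x \<in> A \<longleftrightarrow> x' \<in> A) \<longleftrightarrow> (d \<in> B \<longleftrightarrow> d' \<in> B)"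
proof -
  have x: "x \<in> XC \<inter> C - S" and x': "x' \<in> XC \<inter> C - S"
    using neighbour_of_D[OF assms(1,7,5)] neighbour_of_D[OF assms(2,8,6)] assms(3,4) by auto
  obtain ys where ys: "is_path (delete H XC) ys" "hd ys = d" "last ys = d'" "set ys \<subseteq> D"
    using component_path[OF wf_graph_delete[OF wf] D_component assms(7,8)] .
  then have path_D: "is_path (induced H D) ys"
    unfolding delete_def is_path_induced_iff by blast
  have "successively (adj (delete H XC)) ys" "ys \<noteq> []"
    using ys(1) unfolding is_path_iff_successively by auto
  from two_colouring_parity[OF B_colouring this] ys(2,3)
  have B_parity: "(d \<in> B \<longleftrightarrow> d' \<in> B) \<longleftrightarrow> odd (length ys)"
    by simp
  \<comment> \<open>The edges \<open>xd\<close>, \<open>x'd'\<close> and the path \<open>ys\<close> close a cycle (if \<open>x = x'\<close>) or an \<open>(x,x')\<close>-path.\<close>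
  show ?thesis
  proof (cases "x = x'")
    case True
    have "odd (length ys)"
    proof
      assume "even (length ys)"
      then have "has_odd_cycle (induced H ({x} \<union> D))"
        using odd_cycle_of_path[OF wf path_D assms(5)] ys(2,3) assms(1,2) True by simp
      with no_odd_cycle_at_D[OF x] show False ..
    qed
    with True B_parity show ?thesis
      by simp
  next
    case False
    have "(length ys + 1) mod 2 \<in> {0, 1}"
      by auto
    moreover have "has_path_parity (induced H ({x, x'} \<union> D)) x x' ((length ys + 1) mod 2)"
      using path_parity_of_path[OF wf path_D False assms(5,6)] ys(2,3) assms(1,2) by simp
    ultimately have "(x \<in> A \<longleftrightarrow> x' \<in> A) \<longleftrightarrow> (length ys + 1) mod 2 = 0"
      by (rule path_parity_at_D[OF x x' False])
    moreover have "(length ys + 1) mod 2 = 0 \<longleftrightarrow> odd (length ys)"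
      by presburger
    ultimately show ?thesis
      using B_parity by simp
  qed
qed

lemma bipartite_delete_S: "bipartite (delete H S)"
proof (rule bipartite_glue)
  show "wf_graph (delete H S)"
    using wf by (rule wf_graph_delete)
  show "two_colouring (delete (delete H S) D) A"
    using A_colouring by (simp add: delete_delete Un_commute)
  show "two_colouring (induced (delete H S) D) B"
    unfolding two_colouring_def
  proof (intro allI impI)
    fix u v assume "adj (induced (delete H S) D) u v"
    then have "adj (delete H XC) u v"
      using D_subset_verts by auto
    with B_colouring show "u \<in> B \<longleftrightarrow> v \<notin> B"
      unfolding two_colouring_def by blast
  qed
next
  fix x d x' d'
  assume "adj (delete H S) x d" "adj (delete H S) x' d'" "x \<notin> D" "x' \<notin> D" "d \<in> D" "d' \<in> D"
  then show "(x \<in> A \<longleftrightarrow> x' \<in> A) \<longleftrightarrow> (d \<in> B \<longleftrightarrow> d' \<in> B)"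
    using cross_edges_consistent[of x d x' d'] by simp
qed

end

theorem mainTheorem7:
  fixes G H :: "'a graph" and XC D H' :: "'a set" and z :: nat
  assumes "wf_graph G"
    and "XC \<subseteq> verts G"
    and "certificate G XC z H"
    and "component (delete H XC) D"
    and "component H H'" and "D \<subseteq> H'"
    and "\<forall>x\<in>XC \<inter> H'. has_odd_cycle (induced H ({x} \<union> D)) \<longrightarrow>
           card {D'. component (delete H XC) D' \<and> D' \<noteq> D \<and>
                      has_odd_cycle (induced H ({x} \<union> D'))} \<ge> z"
    and "\<forall>x\<in>XC \<inter> H'. \<forall>y\<in>XC \<inter> H'. \<forall>p\<in>{0, 1::nat}. x \<noteq> y \<longrightarrow>
           has_path_parity (induced H ({x, y} \<union> D)) x y p \<longrightarrow>
           card {D'. component (delete H XC) D' \<and> D' \<noteq> D \<and>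
                      has_path_parity (induced H ({x, y} \<union> D')) x y p} \<ge> z"
  shows "oct H = oct (delete H D)"
proof -
  have wf: "wf_graph H" and bipartite_XC: "bipartite (delete H XC)"
    and XC_sparse: "card (XC \<inter> H') \<le> z"
    using assms(3,5) unfolding certificate_def subgraph_def by auto
  obtain B where B: "two_colouring (delete H XC) B"
    using bipartite_XC bipartite_iff_two_colouring[OF wf_graph_delete[OF wf]] by blast
  obtain S where S: "S \<subseteq> verts H - D" "card S = oct (delete H D)" "bipartite (delete H (D \<union> S))"
    using oct_attained[OF wf_graph_delete[OF wf]] by (auto simp: delete_delete)
  obtain A where A: "two_colouring (delete H (D \<union> S)) A"
    using S(3) bipartite_iff_two_colouring[OF wf_graph_delete[OF wf]] by blast
  have "oct H \<le> card S"
  proof (rule ccontr)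
    assume "\<not> oct H \<le> card S"
    then have "card (S \<inter> H') < z"
      using card_Int_component_less_if_card_less_oct[OF wf assms(5,6) _ bipartite_XC S(3)] S(1)
        XC_sparse by fastforce
    then interpret sparse_transversal H XC D H' S A B z
      using wf B assms(4-8) S(1) A by unfold_locales
    have "oct H \<le> card S"
      using bipartite_delete_S S(1) by (intro oct_le) auto
    with \<open>\<not> oct H \<le> card S\<close> show False ..
  qed
  then show ?thesis
    using S(2) oct_delete_le[OF wf, of D] by simp
qed

end
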